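(* Let $G$ be an ordered group and let $S$ be a finite nonempty subset of $G$. If $|S^2| \leq 3|S|-3$, then the subgroup of $G$ generated by $S$ is abelian.
   Context: An ordered group is a group $G$ (written multiplicatively) equipped with a total order $<$ that is invariant under both left and right multiplication: $a<b$ implies $ca<cb$ and $ac<bc$ for all $a,b,c\in G$. For a subset $S\subseteq G$, $S^2=\{ab : a,b\in S\}$. *)

theory Defs
  imports "HOL-Algebra.Algebra"
begin

definition ordered_group :: "('a, 'b) monoid_scheme \<Rightarrow> ('a \<Rightarrow> 'a \<Rightarrow> bool) \<Rightarrow> bool" where
  "ordered_group G lt \<longleftrightarrow>
     group G \<and>
     (\<forall>a\<in>carrier G. \<not> lt a a) \<and>
     (\<forall>a\<in>carrier G. \<forall>b\<in>carrier G. \<forall>c\<in>carrier G. lt a b \<longrightarrow> lt b c \<longrightarrow> lt a c) \<and>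
     (\<forall>a\<in>carrier G. \<forall>b\<in>carrier G. lt a b \<or> a = b \<or> lt b a) \<and>
     (\<forall>a\<in>carrier G. \<forall>b\<in>carrier G. \<forall>c\<in>carrier G.
        lt a b \<longrightarrow> lt (c \<otimes>\<^bsub>G\<^esub> a) (c \<otimes>\<^bsub>G\<^esub> b) \<and> lt (a \<otimes>\<^bsub>G\<^esub> c) (b \<otimes>\<^bsub>G\<^esub> c))"

end

theory Submission
  imports Defs
begin

text \<open>Remove the largest element b of S and put T = S - {b}. All of T lies below b, so
if c is the largest element of T then c b and b b exceed every product in T^2; this yields
|A^2| \<ge> 2|A| - 1 for every finite A. For non-abelian S one proves |S^2| \<ge> 3|S| - 2
by induction. If T is non-abelian, a third new product is b w or w b, where w is the largest
element of T not commuting with a suitable element a that commutes with b: a factorisation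
through T would either exceed the order or make w commute with a. If T is abelian, let v be
the largest element of T not commuting with b; then T^2 centralises v while b T and T b do
not, and v b \<notin> b T or b v \<notin> T b, so |T| + 2 products of S^2 are new.\<close>

definition centralizer :: "('a, 'b) monoid_scheme \<Rightarrow> 'a \<Rightarrow> 'a set" where
  "centralizer G x = {h \<in> carrier G. x \<otimes>\<^bsub>G\<^esub> h = h \<otimes>\<^bsub>G\<^esub> x}"

lemma (in group) mem_centralizer_sym:
  "x \<in> carrier G \<Longrightarrow> y \<in> centralizer G x \<longleftrightarrow> y \<in> carrier G \<and> x \<in> centralizer G y"
  by (auto simp: centralizer_def)

lemma (in group) subgroup_centralizer:
  assumes x: "x \<in> carrier G"
  shows "subgroup (centralizer G x) G"
proof (rule subgroupI)
  show "centralizer G x \<subseteq> carrier G" "centralizer G x \<noteq> {}"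
    using x by (auto simp: centralizer_def intro!: exI[of _ \<one>])
next
  fix a assume "a \<in> centralizer G x"
  then have a: "a \<in> carrier G" "x \<otimes> a = a \<otimes> x" by (auto simp: centralizer_def)
  have "inv a \<otimes> x = inv a \<otimes> (x \<otimes> a) \<otimes> inv a"
    using a x by (metis inv_closed m_assoc m_closed r_inv r_one)
  also have "\<dots> = inv a \<otimes> (a \<otimes> x) \<otimes> inv a"
    using a by simp
  also have "\<dots> = x \<otimes> inv a"
    using a x by (simp add: m_assoc[symmetric])
  finally show "inv a \<in> centralizer G x"
    using a by (simp add: centralizer_def)
next
  fix a c assume "a \<in> centralizer G x" "c \<in> centralizer G x"
  then have a: "a \<in> carrier G" "x \<otimes> a = a \<otimes> x" and c: "c \<in> carrier G" "x \<otimes> c = c \<otimes> x"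
    by (auto simp: centralizer_def)
  have "x \<otimes> (a \<otimes> c) = a \<otimes> (x \<otimes> c)"
    using a c x by (metis m_assoc)
  also have "\<dots> = (a \<otimes> c) \<otimes> x"
    using a c x by (simp add: m_assoc)
  finally show "a \<otimes> c \<in> centralizer G x"
    using a c by (simp add: centralizer_def)
qed

lemma (in group) subgroup_mult_mem_cancel_left:
  assumes H: "subgroup H G" and x: "x \<in> carrier G" and y: "y \<in> H" and yx: "y \<otimes> x \<in> H"
  shows "x \<in> H"
proof -
  have "y \<in> carrier G" using H y by (rule subgroup.mem_carrier)
  then have "x = inv y \<otimes> (y \<otimes> x)" using x by (simp add: m_assoc[symmetric])
  also have "\<dots> \<in> H"
    using subgroup.m_closed[OF H subgroup.m_inv_closed[OF H y] yx] .
  finally show ?thesis .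
qed

lemma (in group) subgroup_mult_mem_cancel_right:
  assumes H: "subgroup H G" and x: "x \<in> carrier G" and y: "y \<in> H" and xy: "x \<otimes> y \<in> H"
  shows "x \<in> H"
proof -
  have "y \<in> carrier G" using H y by (rule subgroup.mem_carrier)
  then have "x = (x \<otimes> y) \<otimes> inv y" using x by (simp add: m_assoc)
  also have "\<dots> \<in> H"
    using subgroup.m_closed[OF H xy subgroup.m_inv_closed[OF H y]] .
  finally show ?thesis .
qed

lemma (in group) mult_notin_centralizer:
  assumes v: "v \<in> carrier G" and b: "b \<in> carrier G" "b \<notin> centralizer G v"
    and t: "t \<in> centralizer G v"
  shows "b \<otimes> t \<notin> centralizer G v" "t \<otimes> b \<notin> centralizer G v"
  using subgroup_mult_mem_cancel_right[OF subgroup_centralizer[OF v] b(1) t]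
    subgroup_mult_mem_cancel_left[OF subgroup_centralizer[OF v] b(1) t] b(2) by blast+

lemma (in group) comm_group_generate:
  assumes S: "S \<subseteq> carrier G" and comm: "\<And>s t. s \<in> S \<Longrightarrow> t \<in> S \<Longrightarrow> s \<otimes> t = t \<otimes> s"
  shows "comm_group (G\<lparr>carrier := generate G S\<rparr>)"
proof -
  have generate_centralizes: "generate G S \<subseteq> centralizer G x"
    if "x \<in> carrier G" "S \<subseteq> centralizer G x" for x
    using generate_subgroup_incl subgroup_centralizer that by blast
  have "S \<subseteq> centralizer G x" if "x \<in> generate G S" for x
  proof
    fix s assume s: "s \<in> S"
    have "S \<subseteq> centralizer G s" using S s comm by (auto simp: centralizer_def)
    then have "x \<in> centralizer G s" using generate_centralizes S s that by blast
    then show "s \<in> centralizer G x" using S s mem_centralizer_sym by blast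
  qed
  then have "y \<in> centralizer G x" if "x \<in> generate G S" "y \<in> generate G S" for x y
    using generate_centralizes generate_in_carrier S that by blast
  then have "x \<otimes> y = y \<otimes> x" if "x \<in> generate G S" "y \<in> generate G S" for x y
    using that by (simp add: centralizer_def)
  then show ?thesis
    by (intro group.group_comm_groupI subgroup_imp_group generate_is_subgroup S) auto
qed

lemma card_set_mult_add_disjoint:
  assumes "finite S" "T \<subseteq> S" "E \<subseteq> S <#>\<^bsub>G\<^esub> S" "E \<inter> (T <#>\<^bsub>G\<^esub> T) = {}"
  shows "card (T <#>\<^bsub>G\<^esub> T) + card E \<le> card (S <#>\<^bsub>G\<^esub> S)"
proof -
  have fin: "finite (S <#>\<^bsub>G\<^esub> S)" using assms(1) by (simp add: set_mult_def)
  have "T <#>\<^bsub>G\<^esub> T \<subseteq> S <#>\<^bsub>G\<^esub> S" using assms(2) by (intro mono_set_mult)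
  then have "card ((T <#>\<^bsub>G\<^esub> T) \<union> E) \<le> card (S <#>\<^bsub>G\<^esub> S)"
    using assms(3) fin by (simp add: card_mono)
  moreover have "card ((T <#>\<^bsub>G\<^esub> T) \<union> E) = card (T <#>\<^bsub>G\<^esub> T) + card E"
    using assms(4) fin \<open>T <#>\<^bsub>G\<^esub> T \<subseteq> S <#>\<^bsub>G\<^esub> S\<close> assms(3)
    by (intro card_Un_disjoint) (auto intro: finite_subset)
  ultimately show ?thesis by simp
qed

locale biordered_group = group G for G (structure) +
  fixes lt :: "'a \<Rightarrow> 'a \<Rightarrow> bool"
  assumes less_irrefl: "a \<in> carrier G \<Longrightarrow> \<not> lt a a"
    and less_trans: "\<lbrakk>a \<in> carrier G; b \<in> carrier G; c \<in> carrier G; lt a b; lt b c\<rbrakk> \<Longrightarrow> lt a c"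
    and less_linear: "\<lbrakk>a \<in> carrier G; b \<in> carrier G\<rbrakk> \<Longrightarrow> lt a b \<or> a = b \<or> lt b a"
    and mult_left_strict_mono:
      "\<lbrakk>a \<in> carrier G; b \<in> carrier G; c \<in> carrier G; lt a b\<rbrakk> \<Longrightarrow> lt (c \<otimes> a) (c \<otimes> b)"
    and mult_right_strict_mono:
      "\<lbrakk>a \<in> carrier G; b \<in> carrier G; c \<in> carrier G; lt a b\<rbrakk> \<Longrightarrow> lt (a \<otimes> c) (b \<otimes> c)"

lemma ordered_group_imp_biordered_group: "ordered_group G lt \<Longrightarrow> biordered_group G lt"
  unfolding ordered_group_def biordered_group_def biordered_group_axioms_def by blast

context biordered_group
begin

lemma less_asym: "\<lbrakk>a \<in> carrier G; b \<in> carrier G; lt a b\<rbrakk> \<Longrightarrow> \<not> lt b a"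
  using less_trans less_irrefl by blast

lemma mult_le_less_mono:
  assumes "a \<in> carrier G" "b \<in> carrier G" "c \<in> carrier G" "d \<in> carrier G"
    and "lt a b \<or> a = b" "lt c d"
  shows "lt (a \<otimes> c) (b \<otimes> d)"
  using assms mult_left_strict_mono mult_right_strict_mono less_trans[of "a \<otimes> c" "a \<otimes> d" "b \<otimes> d"]
  by auto

lemma mult_less_le_mono:
  assumes "a \<in> carrier G" "b \<in> carrier G" "c \<in> carrier G" "d \<in> carrier G"
    and "lt a b" "lt c d \<or> c = d"
  shows "lt (a \<otimes> c) (b \<otimes> d)"
  using assms mult_left_strict_mono mult_right_strict_mono less_trans[of "a \<otimes> c" "b \<otimes> c" "b \<otimes> d"]
  by auto

definition is_greatest :: "'a set \<Rightarrow> 'a \<Rightarrow> bool" where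
  "is_greatest Y m \<longleftrightarrow> m \<in> Y \<and> (\<forall>x\<in>Y. x \<noteq> m \<longrightarrow> lt x m)"

lemma finite_has_greatest:
  assumes "finite Y" "Y \<noteq> {}" "Y \<subseteq> carrier G"
  obtains m where "is_greatest Y m"
  using assms unfolding is_greatest_def
proof (induction Y arbitrary: thesis rule: finite_ne_induct)
  case (insert y Y)
  obtain m where m: "m \<in> Y" "\<forall>x\<in>Y. x \<noteq> m \<longrightarrow> lt x m"
    using insert.IH insert.prems(2) by blast
  have carrier: "y \<in> carrier G" "Y \<subseteq> carrier G" using insert.prems(2) by auto
  show ?case
  proof (cases "lt m y")
    case True
    have "lt x y" if "x \<in> Y" for x
      using that m carrier True less_trans[of x m y] by (cases "x = m") auto
    then show ?thesis using insert.prems(1) by blast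
  next
    case False
    then show ?thesis using insert.prems(1) m carrier less_linear[of m y] by auto
  qed
qed blast

lemma finite_induct_greatest [consumes 2, case_names empty insert_greatest]:
  assumes "finite S" "S \<subseteq> carrier G" and "P {}"
    and step: "\<And>b T. \<lbrakk>finite T; T \<subseteq> carrier G; b \<in> carrier G; \<forall>t\<in>T. lt t b; P T\<rbrakk>
      \<Longrightarrow> P (insert b T)"
  shows "P S"
  using assms(1,2)
proof (induction S rule: finite_psubset_induct)
  case (psubset S)
  show ?case
  proof (cases "S = {}")
    case False
    obtain b where b: "is_greatest S b"
      using finite_has_greatest[OF \<open>finite S\<close> False \<open>S \<subseteq> carrier G\<close>] .
    then have "b \<in> S" by (simp add: is_greatest_def)
    have "P (insert b (S - {b}))"
    proof (rule step)
      show "finite (S - {b})" "S - {b} \<subseteq> carrier G" "b \<in> carrier G"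
        using psubset.hyps psubset.prems \<open>b \<in> S\<close> by auto
      show "\<forall>t\<in>S - {b}. lt t b" using b by (simp add: is_greatest_def)
      show "P (S - {b})" using psubset.IH psubset.prems \<open>b \<in> S\<close> by blast
    qed
    then show ?thesis using \<open>b \<in> S\<close> by (simp add: insert_absorb)
  qed (use assms(3) in simp)
qed

lemma set_mult_greatest_products_notin:
  assumes T: "T \<subseteq> carrier G" and b: "b \<in> carrier G" "\<forall>t\<in>T. lt t b" and c: "is_greatest T c"
  shows "c \<otimes> b \<notin> T <#> T" "b \<otimes> c \<notin> T <#> T" "b \<otimes> b \<notin> T <#> T"
proof -
  have c': "c \<in> T" "c \<in> carrier G" "\<forall>t\<in>T. t \<noteq> c \<longrightarrow> lt t c"
    using c T by (auto simp: is_greatest_def)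
  have below: "lt x (c \<otimes> b) \<and> lt x (b \<otimes> c) \<and> lt x (b \<otimes> b)" if x: "x \<in> T <#> T" for x
  proof -
    obtain y z where yz: "y \<in> T" "z \<in> T" "x = y \<otimes> z"
      using x by (auto simp: set_mult_def)
    have carrier: "y \<in> carrier G" "z \<in> carrier G" using yz T by auto
    have "lt y c \<or> y = c" "lt z c \<or> z = c" "lt y b" "lt z b" using yz c' b by auto
    then show ?thesis
      using yz(3) carrier b(1) c'(2) mult_le_less_mono[of y c z b]
        mult_less_le_mono[of y b z c] mult_less_le_mono[of y b z b]
      by auto
  qed
  have "c \<otimes> b \<in> carrier G" "b \<otimes> c \<in> carrier G" "b \<otimes> b \<in> carrier G"
    using b c' by auto
  with below less_irrefl show "c \<otimes> b \<notin> T <#> T" "b \<otimes> c \<notin> T <#> T" "b \<otimes> b \<notin> T <#> T"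
    by blast+
qed

lemma card_set_mult_insert_greatest:
  assumes T: "finite T" "T \<subseteq> carrier G" "T \<noteq> {}" and b: "b \<in> carrier G" "\<forall>t\<in>T. lt t b"
  shows "card (T <#> T) + 2 \<le> card (insert b T <#> insert b T)"
proof -
  obtain c where c: "is_greatest T c" using finite_has_greatest T by blast
  then have c': "c \<in> T" "c \<in> carrier G" using T by (auto simp: is_greatest_def)
  then have "c \<noteq> b" using b(2) less_irrefl[OF b(1)] by blast
  then have "card {c \<otimes> b, b \<otimes> b} = 2" using c' b by simp
  moreover have "{c \<otimes> b, b \<otimes> b} \<subseteq> insert b T <#> insert b T"
    using c' by (auto simp: set_mult_def)
  moreover have "{c \<otimes> b, b \<otimes> b} \<inter> (T <#> T) = {}"
    using set_mult_greatest_products_notin[OF T(2) b c] by blast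
  ultimately show ?thesis
    using card_set_mult_add_disjoint[of "insert b T" T "{c \<otimes> b, b \<otimes> b}" G] T(1) by auto
qed

lemma card_set_mult_self_ge:
  assumes "finite A" "A \<subseteq> carrier G" "A \<noteq> {}"
  shows "2 * card A - 1 \<le> card (A <#> A)"
  using assms
proof (induction A rule: finite_induct_greatest)
  case (insert_greatest b T)
  show ?case
  proof (cases "T = {}")
    case True
    then have "insert b T <#> insert b T = {b \<otimes> b}" by (auto simp: set_mult_def)
    then show ?thesis using True by simp
  next
    case False
    have "b \<notin> T" using insert_greatest.hyps(4) less_irrefl[OF insert_greatest.hyps(3)] by blast
    then have "card (insert b T) = card T + 1" using insert_greatest.hyps by simp
    moreover have "card T \<ge> 1" using False insert_greatest.hyps by (simp add: Suc_leI card_gt_0_iff)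
    moreover have "2 * card T - 1 \<le> card (T <#> T)" using False insert_greatest.IH by blast
    moreover have "card (T <#> T) + 2 \<le> card (insert b T <#> insert b T)"
      using card_set_mult_insert_greatest[OF insert_greatest.hyps(1,2) False insert_greatest.hyps(3,4)] .
    ultimately show ?thesis by linarith
  qed
qed simp

lemma greatest_noncommuting_mult_notin_image:
  assumes T: "T \<subseteq> carrier G" and b: "b \<in> carrier G"
    and v: "is_greatest (T - centralizer G b) v"
  shows "v \<otimes> b \<notin> (\<lambda>t. b \<otimes> t) ` T \<or> b \<otimes> v \<notin> (\<lambda>t. t \<otimes> b) ` T"
proof (rule ccontr)
  assume "\<not> ?thesis"
  then obtain t t' where t: "t \<in> T" "v \<otimes> b = b \<otimes> t" and t': "t' \<in> T" "b \<otimes> v = t' \<otimes> b"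
    by auto
  have v': "v \<in> T" "v \<in> carrier G" "v \<otimes> b \<noteq> b \<otimes> v"
    using v T by (auto simp: is_greatest_def centralizer_def)
  have carrier: "t \<in> carrier G" "t' \<in> carrier G" using t t' T by auto
  have below_v: "lt s v" if "s \<in> T" "s \<notin> centralizer G b" "s \<noteq> v" for s
    using v that by (auto simp: is_greatest_def)
  have "t \<notin> centralizer G b"
  proof
    assume "t \<in> centralizer G b"
    then have "v \<otimes> b = t \<otimes> b" using t by (simp add: centralizer_def)
    then have "v = t" using v' carrier b by simp
    then show False using t(2) v'(3) by simp
  qed
  moreover have "t \<noteq> v" using t(2) v'(3) by auto
  ultimately have "lt (b \<otimes> t) (b \<otimes> v)"
    using below_v t(1) mult_left_strict_mono carrier v' b by blast
  moreover have "t' \<notin> centralizer G b"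
  proof
    assume "t' \<in> centralizer G b"
    then have "b \<otimes> v = b \<otimes> t'" using t' by (simp add: centralizer_def)
    then have "v = t'" using v' carrier b by simp
    then show False using t'(2) v'(3) by simp
  qed
  moreover have "t' \<noteq> v" using t'(2) v'(3) by auto
  ultimately have "lt (t' \<otimes> b) (v \<otimes> b)"
    using below_v t'(1) mult_right_strict_mono carrier v' b by blast
  then have "lt (b \<otimes> v) (v \<otimes> b)" using t'(2) by simp
  moreover have "lt (v \<otimes> b) (b \<otimes> v)" using \<open>lt (b \<otimes> t) (b \<otimes> v)\<close> t(2) by simp
  ultimately show False using less_asym v'(2) b by blast
qed

lemma product_below_greatest_noncommuting:
  assumes T: "T \<subseteq> carrier G" and a: "a \<in> carrier G" and b: "b \<in> carrier G" "\<forall>t\<in>T. lt t b"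
    and w: "is_greatest (T - centralizer G a) w"
    and yz: "y \<in> T" "z \<in> T" "y \<otimes> z \<notin> centralizer G a"
  shows "lt (y \<otimes> z) (w \<otimes> b) \<or> lt (y \<otimes> z) (b \<otimes> w)"
proof -
  have carrier: "y \<in> carrier G" "z \<in> carrier G" "w \<in> carrier G"
    using yz w T by (auto simp: is_greatest_def)
  have below_w: "lt t w \<or> t = w" if "t \<in> T" "t \<notin> centralizer G a" for t
    using w that by (auto simp: is_greatest_def)
  have "y \<notin> centralizer G a \<or> z \<notin> centralizer G a"
    using yz(3) subgroup.m_closed[OF subgroup_centralizer[OF a]] by blast
  then show ?thesis
  proof
    assume "y \<notin> centralizer G a"
    then show ?thesis
      using mult_le_less_mono[OF carrier(1,3,2) b(1)] below_w yz b(2) by simp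
  next
    assume "z \<notin> centralizer G a"
    then show ?thesis
      using mult_less_le_mono[OF carrier(1) b(1) carrier(2,3)] below_w yz b(2) by simp
  qed
qed

lemma greatest_noncommuting_product_less:
  assumes T: "T \<subseteq> carrier G" and a: "a \<in> carrier G"
    and b: "b \<in> centralizer G a" "\<forall>t\<in>T. lt t b"
    and w: "is_greatest (T - centralizer G a) w"
  shows "b \<otimes> w \<in> T <#> T \<Longrightarrow> lt (b \<otimes> w) (w \<otimes> b)"
    and "w \<otimes> b \<in> T <#> T \<Longrightarrow> lt (w \<otimes> b) (b \<otimes> w)"
proof -
  have w': "w \<in> carrier G" "w \<notin> centralizer G a" using w T by (auto simp: is_greatest_def)
  have bc: "b \<in> carrier G" using b(1) by (simp add: centralizer_def)
  have noncentral: "b \<otimes> w \<notin> centralizer G a" "w \<otimes> b \<notin> centralizer G a"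
    using mult_notin_centralizer[OF a w' b(1)] by auto
  have below: "lt x (w \<otimes> b) \<or> lt x (b \<otimes> w)"
    if "x \<in> T <#> T" "x \<notin> centralizer G a" for x
    using that product_below_greatest_noncommuting[OF T a bc b(2) w]
    by (auto simp: set_mult_def)
  show "lt (b \<otimes> w) (w \<otimes> b)" if "b \<otimes> w \<in> T <#> T"
    using below[OF that noncentral(1)] less_irrefl[OF m_closed[OF bc w'(1)]] by blast
  show "lt (w \<otimes> b) (b \<otimes> w)" if "w \<otimes> b \<in> T <#> T"
    using below[OF that noncentral(2)] less_irrefl[OF m_closed[OF w'(1) bc]] by blast
qed

lemma new_product_centralizing:
  assumes T: "finite T" "T \<subseteq> carrier G" and b: "b \<in> carrier G" "\<forall>t\<in>T. lt t b"
    and central: "T \<subseteq> centralizer G b" and nonabelian: "\<exists>x\<in>T. \<exists>y\<in>T. x \<otimes> y \<noteq> y \<otimes> x"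
    and c: "is_greatest T c"
  obtains x where "x \<in> insert b T <#> insert b T" "x \<notin> T <#> T" "x \<noteq> c \<otimes> b" "x \<noteq> b \<otimes> b"
proof -
  define N where "N = {u \<in> T. \<not> T \<subseteq> centralizer G u}"
  have "N \<noteq> {}" using nonabelian T(2) by (auto simp: N_def centralizer_def)
  then obtain u where u: "is_greatest N u"
    using finite_has_greatest[of N] T by (auto simp: N_def)
  then have u': "u \<in> T" "u \<in> carrier G" "\<not> T \<subseteq> centralizer G u"
    using T(2) by (auto simp: is_greatest_def N_def)
  obtain w where w: "is_greatest (T - centralizer G u) w"
    using finite_has_greatest[of "T - centralizer G u"] T u' by auto
  then have w': "w \<in> T" "w \<in> carrier G" "w \<notin> centralizer G u"
    using T(2) by (auto simp: is_greatest_def)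
  have c': "c \<in> T" "c \<in> carrier G" using c T(2) by (auto simp: is_greatest_def)
  have "w \<in> N" using w' u' by (auto simp: N_def centralizer_def)
  moreover have "w \<noteq> u" using w' u' by (auto simp: centralizer_def)
  ultimately have "lt w u" using u by (simp add: is_greatest_def)
  moreover have "lt u c \<or> u = c" using c u' by (auto simp: is_greatest_def)
  ultimately have "w \<noteq> c" using less_trans[OF w'(2) u'(2) c'(2)] less_irrefl[OF c'(2)] by auto
  have bw: "b \<otimes> w = w \<otimes> b" and bc: "b \<otimes> c = c \<otimes> b"
    using central w'(1) c'(1) by (auto simp: centralizer_def)
  have "b \<in> centralizer G u" using central u'(1) b(1) by (auto simp: centralizer_def)
  then have "b \<otimes> w \<notin> T <#> T"
    using greatest_noncommuting_product_less(1)[OF T(2) u'(2) _ b(2) w] bw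
      less_irrefl[OF m_closed[OF b(1) w'(2)]] by auto
  moreover have "b \<otimes> w \<in> insert b T <#> insert b T"
    using w'(1) by (auto simp: set_mult_def)
  moreover have "b \<otimes> w \<noteq> b \<otimes> c" "b \<otimes> w \<noteq> b \<otimes> b"
    using \<open>w \<noteq> c\<close> w'(1,2) c'(2) b less_irrefl[OF b(1)] by auto
  then have "b \<otimes> w \<noteq> c \<otimes> b" "b \<otimes> w \<noteq> b \<otimes> b" using bc by simp_all
  ultimately show thesis using that by blast
qed

lemma new_product_not_centralizing:
  assumes T: "finite T" "T \<subseteq> carrier G" and b: "b \<in> carrier G" "\<forall>t\<in>T. lt t b"
    and noncentral: "\<not> T \<subseteq> centralizer G b" and c: "is_greatest T c"
  obtains x where "x \<in> insert b T <#> insert b T" "x \<notin> T <#> T" "x \<noteq> c \<otimes> b" "x \<noteq> b \<otimes> b"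
proof -
  obtain v where v: "is_greatest (T - centralizer G b) v"
    using finite_has_greatest[of "T - centralizer G b"] T noncentral by auto
  then have v': "v \<in> T" "v \<in> carrier G" "v \<otimes> b \<noteq> b \<otimes> v"
    using T(2) b(1) by (auto simp: is_greatest_def centralizer_def)
  have c': "c \<in> T" "c \<in> carrier G" using c T(2) by (auto simp: is_greatest_def)
  have "v \<noteq> b" using v' b(2) less_irrefl[OF b(1)] by blast
  have products: "v \<otimes> b \<in> insert b T <#> insert b T" "b \<otimes> v \<in> insert b T <#> insert b T"
    using v'(1) by (auto simp: set_mult_def)
  show thesis
  proof (cases "v = c")
    case True
    then show thesis
      using that[of "b \<otimes> c"] products set_mult_greatest_products_notin[OF T(2) b c]
        v'(2,3) \<open>v \<noteq> b\<close> b(1) by auto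
  next
    case False
    then have "lt v c" using c v'(1) by (auto simp: is_greatest_def)
    have "c \<in> centralizer G b"
    proof (rule ccontr)
      assume "c \<notin> centralizer G b"
      then have "lt c v" using v c'(1) False by (auto simp: is_greatest_def)
      then show False using \<open>lt v c\<close> less_asym v'(2) c'(2) by blast
    qed
    then have bc: "b \<otimes> c = c \<otimes> b" by (simp add: centralizer_def)
    have "b \<in> centralizer G b" using b(1) by (simp add: centralizer_def)
    then have "v \<otimes> b \<notin> T <#> T \<or> b \<otimes> v \<notin> T <#> T"
      using greatest_noncommuting_product_less[OF T(2) b(1) _ b(2) v] less_asym v'(2) b(1) by blast
    moreover have "v \<otimes> b \<noteq> c \<otimes> b" "b \<otimes> v \<noteq> b \<otimes> c" "v \<otimes> b \<noteq> b \<otimes> b" "b \<otimes> v \<noteq> b \<otimes> b"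
      using False \<open>v \<noteq> b\<close> v'(2) c'(2) b(1) by auto
    then have "v \<otimes> b \<noteq> c \<otimes> b" "b \<otimes> v \<noteq> c \<otimes> b" "v \<otimes> b \<noteq> b \<otimes> b" "b \<otimes> v \<noteq> b \<otimes> b"
      using bc by simp_all
    ultimately show thesis using that products by blast
  qed
qed

lemma card_set_mult_insert_greatest_nonabelian:
  assumes T: "finite T" "T \<subseteq> carrier G" and b: "b \<in> carrier G" "\<forall>t\<in>T. lt t b"
    and nonabelian: "\<exists>x\<in>T. \<exists>y\<in>T. x \<otimes> y \<noteq> y \<otimes> x"
  shows "card (T <#> T) + 3 \<le> card (insert b T <#> insert b T)"
proof -
  obtain c where c: "is_greatest T c"
    using finite_has_greatest[of T] T nonabelian by blast
  then have c': "c \<in> T" "c \<in> carrier G" using T(2) by (auto simp: is_greatest_def)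
  obtain x where x: "x \<in> insert b T <#> insert b T" "x \<notin> T <#> T" "x \<noteq> c \<otimes> b" "x \<noteq> b \<otimes> b"
    using new_product_centralizing[OF T b _ nonabelian c]
      new_product_not_centralizing[OF T b _ c] by blast
  have "c \<noteq> b" using c' b(2) less_irrefl[OF b(1)] by blast
  then have "card {x, c \<otimes> b, b \<otimes> b} = 3" using x(3,4) c'(2) b(1) by simp
  moreover have "{x, c \<otimes> b, b \<otimes> b} \<subseteq> insert b T <#> insert b T"
    using x(1) c'(1) by (auto simp: set_mult_def)
  moreover have "{x, c \<otimes> b, b \<otimes> b} \<inter> (T <#> T) = {}"
    using x(2) set_mult_greatest_products_notin[OF T(2) b c] by blast
  ultimately show ?thesis
    using card_set_mult_add_disjoint[of "insert b T" T "{x, c \<otimes> b, b \<otimes> b}" G] T(1) by auto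
qed

lemma card_set_mult_insert_greatest_image:
  assumes T: "finite T" "T \<subseteq> carrier G" "T \<noteq> {}" and b: "b \<in> carrier G" "\<forall>t\<in>T. lt t b"
    and E: "inj_on f T" "insert p (f ` T) \<subseteq> insert b T <#> insert b T"
      "insert p (f ` T) \<inter> (T <#> T) = {}" "p \<notin> f ` T" "b \<otimes> b \<notin> insert p (f ` T)"
  shows "card (T <#> T) + card T + 2 \<le> card (insert b T <#> insert b T)"
proof -
  let ?E = "insert (b \<otimes> b) (insert p (f ` T))"
  obtain c where c: "is_greatest T c" using finite_has_greatest T by blast
  have "card ?E = card T + 2" using E(1,4,5) T(1) by (simp add: card_image)
  moreover have "?E \<subseteq> insert b T <#> insert b T" using E(2) by (auto simp: set_mult_def)
  moreover have "?E \<inter> (T <#> T) = {}"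
    using E(3) set_mult_greatest_products_notin(3)[OF T(2) b c] by blast
  ultimately show ?thesis
    using card_set_mult_add_disjoint[of "insert b T" T ?E G] T(1) by auto
qed

lemma card_set_mult_insert_greatest_abelian:
  assumes T: "finite T" "T \<subseteq> carrier G" and b: "b \<in> carrier G" "\<forall>t\<in>T. lt t b"
    and abelian: "\<forall>x\<in>T. \<forall>y\<in>T. x \<otimes> y = y \<otimes> x" and noncentral: "\<not> T \<subseteq> centralizer G b"
  shows "card (T <#> T) + card T + 2 \<le> card (insert b T <#> insert b T)"
proof -
  obtain v where v: "is_greatest (T - centralizer G b) v"
    using finite_has_greatest[of "T - centralizer G b"] T noncentral by auto
  then have v': "v \<in> T" "v \<in> carrier G" "v \<notin> centralizer G b"
    using T(2) by (auto simp: is_greatest_def)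
  let ?C = "centralizer G v"
  have "b \<notin> ?C" using v' b(1) mem_centralizer_sym by blast
  have "T \<subseteq> ?C" using abelian v'(1) T(2) by (auto simp: centralizer_def)
  then have T2: "T <#> T \<subseteq> ?C"
    using subgroup.m_closed[OF subgroup_centralizer[OF v'(2)]] by (auto simp: set_mult_def)
  have outside: "b \<otimes> t \<notin> ?C" "t \<otimes> b \<notin> ?C" if "t \<in> T" for t
    using mult_notin_centralizer[OF v'(2) b(1) \<open>b \<notin> ?C\<close>] \<open>T \<subseteq> ?C\<close> that by blast+
  have new: "(\<lambda>t. b \<otimes> t) ` T \<inter> (T <#> T) = {}" "(\<lambda>t. t \<otimes> b) ` T \<inter> (T <#> T) = {}"
    using outside T2 by blast+
  have products: "(\<lambda>t. b \<otimes> t) ` T \<subseteq> insert b T <#> insert b T"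
    "(\<lambda>t. t \<otimes> b) ` T \<subseteq> insert b T <#> insert b T"
    by (auto simp: set_mult_def)
  have "b \<notin> T" "T \<noteq> {}" using b(2) less_irrefl[OF b(1)] v'(1) by blast+
  consider "v \<otimes> b \<notin> (\<lambda>t. b \<otimes> t) ` T" | "b \<otimes> v \<notin> (\<lambda>t. t \<otimes> b) ` T"
    using greatest_noncommuting_mult_notin_image[OF T(2) b(1) v] by blast
  then show ?thesis
  proof cases
    case 1
    show ?thesis
    proof (rule card_set_mult_insert_greatest_image[OF T \<open>T \<noteq> {}\<close> b])
      show "inj_on (\<lambda>t. b \<otimes> t) T"
        using T(2) b(1) by (intro inj_onI) (metis l_cancel subsetD)
    qed (use 1 new products T(2) v'(1) b(1) \<open>b \<notin> T\<close> in auto)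
  next
    case 2
    show ?thesis
    proof (rule card_set_mult_insert_greatest_image[OF T \<open>T \<noteq> {}\<close> b])
      show "inj_on (\<lambda>t. t \<otimes> b) T"
        using T(2) b(1) by (intro inj_onI) (metis r_cancel subsetD)
    qed (use 2 new products T(2) v'(1) b(1) \<open>b \<notin> T\<close> in auto)
  qed
qed

lemma card_set_mult_self_nonabelian:
  assumes "finite S" "S \<subseteq> carrier G" "\<exists>x\<in>S. \<exists>y\<in>S. x \<otimes> y \<noteq> y \<otimes> x"
  shows "3 * card S - 2 \<le> card (S <#> S)"
  using assms
proof (induction S rule: finite_induct_greatest)
  case (insert_greatest b T)
  have "b \<notin> T" using insert_greatest.hyps(4) less_irrefl[OF insert_greatest.hyps(3)] by blast
  then have card_S: "card (insert b T) = card T + 1" using insert_greatest.hyps(1) by simp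
  show ?case
  proof (cases "\<exists>x\<in>T. \<exists>y\<in>T. x \<otimes> y \<noteq> y \<otimes> x")
    case True
    then have "T \<noteq> {}" by blast
    then have "card T \<ge> 1" using insert_greatest.hyps(1) by (simp add: Suc_leI card_gt_0_iff)
    moreover have "3 * card T - 2 \<le> card (T <#> T)" using True insert_greatest.IH by blast
    moreover have "card (T <#> T) + 3 \<le> card (insert b T <#> insert b T)"
      using card_set_mult_insert_greatest_nonabelian[OF insert_greatest.hyps(1-4) True] .
    ultimately show ?thesis using card_S by linarith
  next
    case False
    then have "\<not> T \<subseteq> centralizer G b"
      using insert_greatest.prems by (auto simp: centralizer_def)
    then have "T \<noteq> {}" by blast
    then have "card T \<ge> 1" using insert_greatest.hyps(1) by (simp add: Suc_leI card_gt_0_iff)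
    moreover have "2 * card T - 1 \<le> card (T <#> T)"
      using card_set_mult_self_ge[OF insert_greatest.hyps(1,2) \<open>T \<noteq> {}\<close>] .
    moreover have "card (T <#> T) + card T + 2 \<le> card (insert b T <#> insert b T)"
      using card_set_mult_insert_greatest_abelian[OF insert_greatest.hyps(1-4)] False
        \<open>\<not> T \<subseteq> centralizer G b\<close> by blast
    ultimately show ?thesis using card_S by linarith
  qed
qed simp

end

theorem theorem1p3:
  fixes G (structure) and lt :: "'a \<Rightarrow> 'a \<Rightarrow> bool" and S :: "'a set"
  assumes "ordered_group G lt"
    and "S \<subseteq> carrier G" and "finite S" and "S \<noteq> {}"
    and "card (S <#> S) \<le> 3 * card S - 3"
  shows "comm_group (G\<lparr>carrier := generate G S\<rparr>)"
proof -
  interpret biordered_group G lt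
    using assms(1) by (rule ordered_group_imp_biordered_group)
  have "card S \<ge> 1" using assms(3,4) by (simp add: Suc_leI card_gt_0_iff)
  then have "\<not> 3 * card S - 2 \<le> card (S <#> S)" using assms(5) by linarith
  then have "x \<otimes> y = y \<otimes> x" if "x \<in> S" "y \<in> S" for x y
    using card_set_mult_self_nonabelian[OF assms(3,2)] that by blast
  then show ?thesis using comm_group_generate[OF assms(2)] by blast
qed

end
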